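(* Let $G$ be a connected simple graph with maximum degree at most $3$ and minimum degree at least $2$, in which no two adjacent vertices both have degree $3$. Let $M_1,M_2$ be disjoint matchings of $G$ such that $|M_1\cup M_2|$ is maximum over all pairs of disjoint matchings, and, subject to this, such that the graph $G_{M_1,M_2}$ has the minimum number of connected components. Then each connected component of $G_{M_1,M_2}$ is a path $P_2$ or a path $P_3$, and if a component is a $P_3$, then its middle vertex has degree $2$ in $G$.
   Context: $G_{M_1,M_2}$ denotes the subgraph of $G$ induced by the edge set $E(G)\setminus(M_1\cup M_2)$ (its vertices are the endpoints of these edges). $P_k$ denotes a path on $k$ vertices. *)

theory Defs
  imports Main
begin

definition simple_graph :: "'a set \<Rightarrow> 'a set set \<Rightarrow> bool" where
  "simple_graph V E \<longleftrightarrow> finite V \<and>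
     (\<forall>e\<in>E. \<exists>a b. a \<noteq> b \<and> a \<in> V \<and> b \<in> V \<and> e = {a, b})"

definition degree :: "'a set set \<Rightarrow> 'a \<Rightarrow> nat" where
  "degree E v = card {e \<in> E. v \<in> e}"

definition reach :: "'a set set \<Rightarrow> 'a \<Rightarrow> 'a \<Rightarrow> bool" where
  "reach F = (\<lambda>x y. \<exists>e\<in>F. e = {x, y})\<^sup>*\<^sup>*"

definition connected_graph :: "'a set \<Rightarrow> 'a set set \<Rightarrow> bool" where
  "connected_graph V E \<longleftrightarrow> V \<noteq> {} \<and> (\<forall>u\<in>V. \<forall>v\<in>V. reach E u v)"

definition matching :: "'a set set \<Rightarrow> 'a set set \<Rightarrow> bool" where
  "matching E M \<longleftrightarrow> M \<subseteq> E \<and> (\<forall>e\<in>M. \<forall>f\<in>M. e \<noteq> f \<longrightarrow> e \<inter> f = {})"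

text \<open>Edge set of the graph G_{M1,M2}: the subgraph induced by E minus (M1 union M2);
  its vertex set is the union of these edges.\<close>
definition rest_edges :: "'a set set \<Rightarrow> 'a set set \<Rightarrow> 'a set set \<Rightarrow> 'a set set" where
  "rest_edges E M1 M2 = E - (M1 \<union> M2)"

definition components :: "'a set set \<Rightarrow> 'a set set" where
  "components F = (\<lambda>u. {v. reach F u v}) ` (\<Union>F)"

definition comp_edges :: "'a set set \<Rightarrow> 'a set \<Rightarrow> 'a set set" where
  "comp_edges F C = {e \<in> F. e \<subseteq> C}"

definition is_P2 :: "'a set set \<Rightarrow> 'a set \<Rightarrow> bool" where
  "is_P2 F C \<longleftrightarrow> (\<exists>a b. a \<noteq> b \<and> C = {a, b} \<and> comp_edges F C = {{a, b}})"

definition is_P3_mid :: "'a set set \<Rightarrow> 'a set \<Rightarrow> 'a \<Rightarrow> bool" where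
  "is_P3_mid F C b \<longleftrightarrow> (\<exists>a c. a \<noteq> b \<and> b \<noteq> c \<and> a \<noteq> c \<and> C = {a, b, c} \<and>
      comp_edges F C = {{a, b}, {b, c}})"

definition is_P3 :: "'a set set \<Rightarrow> 'a set \<Rightarrow> bool" where
  "is_P3 F C \<longleftrightarrow> (\<exists>b. is_P3_mid F C b)"

end

theory Submission
  imports Defs "HOL-Library.Transitive_Closure_Table" "HOL-Library.Sublist"
begin

(* Let D = M1 \<union> M2 and H = E - D. By maximality every edge of H meets an edge of M1 and an
   edge of M2. With maximum degree 3 and no two adjacent vertices of degree 3, this rules out a
   vertex of H-degree 3 and an H-edge both of whose ends have further H-neighbours, so every
   component of H is a P2 or a P3. If the middle b of a P3 a-b-c had degree 3, its third edge
   would lie in D, say in M1, and then the only D-edges at a and at c lie in M2. If a were not in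
   the D-component of b, exchanging M1 and M2 on that component would leave both a and b
   uncovered by M1, and ab could be added. So a, b, c lie in one component of D, which has
   maximum degree 2, and all three have D-degree 1; but a path has only two ends. *)

lemma rtrancl_path_Cons:
  "rtrancl_path r v (y # ys) u \<longleftrightarrow> r v y \<and> rtrancl_path r y ys u"
  by (auto elim: rtrancl_path.cases intro: rtrancl_path.step)

text \<open>Here p is the vertex the paths arrived from: v has at most one neighbour besides p, so both
  paths must leave v the same way.\<close>

lemma rtrancl_path_prefix_max_degree_2:
  assumes sym: "symp r"
    and deg2: "\<And>v y z s. r v y \<Longrightarrow> r v z \<Longrightarrow> r v s \<Longrightarrow> y = z \<or> y = s \<or> z = s"
    and "rtrancl_path r v xs a" "rtrancl_path r v ys c"
    and "distinct (v # xs)" "distinct (v # ys)" "p \<notin> set xs" "p \<notin> set ys"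
    and "\<And>y z. r v y \<Longrightarrow> r v z \<Longrightarrow> y \<noteq> p \<Longrightarrow> z \<noteq> p \<Longrightarrow> y = z"
  shows "prefix xs ys \<or> prefix ys xs"
  using assms(3-)
proof (induction xs arbitrary: v ys p)
  case Nil
  then show ?case by simp
next
  case (Cons y xs)
  show ?case
  proof (cases ys)
    case Nil
    then show ?thesis by simp
  next
    case (Cons z ys')
    with Cons.prems have vy: "r v y" "rtrancl_path r y xs a"
      and vz: "r v z" "rtrancl_path r z ys' c"
      by (simp_all add: rtrancl_path_Cons)
    have "y = z"
      using Cons.prems(5-7) \<open>ys = z # ys'\<close> vy(1) vz(1) by auto
    have "prefix xs ys' \<or> prefix ys' xs"
    proof (rule Cons.IH)
      show "rtrancl_path r y ys' c"
        using vz(2) \<open>y = z\<close> by simp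
      show "y1 = z1" if "r y y1" "r y z1" "y1 \<noteq> v" "z1 \<noteq> v" for y1 z1
        using deg2[OF that(1,2), of v] that(3,4) vy(1) sym by (auto dest: sympD)
    qed (use Cons.prems \<open>ys = z # ys'\<close> \<open>y = z\<close> vy in auto)
    then show ?thesis
      using \<open>ys = z # ys'\<close> \<open>y = z\<close> by auto
  qed
qed

lemma rtrancl_path_prefix_end_two_neighbours:
  assumes "symp r" "rtrancl_path r b xs a" "rtrancl_path r b ys c" "prefix xs ys"
    and "distinct (b # ys)" "xs \<noteq> []" "a \<noteq> c"
  shows "\<exists>y z. r a y \<and> r a z \<and> y \<noteq> z"
proof -
  obtain zs where ys: "ys = xs @ zs"
    using \<open>prefix xs ys\<close> prefixE by blast
  define n where "n = length xs"
  have "last xs = a" "last ys = c"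
    using rtrancl_path_last[OF assms(2)] rtrancl_path_last[OF assms(3)] ys \<open>xs \<noteq> []\<close>
    by simp_all
  then have "zs \<noteq> []"
    using ys \<open>a \<noteq> c\<close> by auto
  then have n: "0 < n" "n < length ys"
    using ys \<open>xs \<noteq> []\<close> by (simp_all add: n_def)
  have a: "ys ! (n - 1) = a"
    using \<open>last xs = a\<close> \<open>xs \<noteq> []\<close> ys by (simp add: n_def last_conv_nth nth_append)
  have before: "r ((b # ys) ! (n - 1)) a"
    using rtrancl_path_nth[OF assms(3), of "n - 1"] n a by simp
  have after: "r a ((b # ys) ! Suc n)"
    using rtrancl_path_nth[OF assms(3), of n] n a by (cases n) simp_all
  have "(b # ys) ! (n - 1) \<noteq> (b # ys) ! Suc n"
    by (subst nth_eq_iff_index_eq[OF \<open>distinct (b # ys)\<close>]) (use n in auto)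
  then show ?thesis
    using before after \<open>symp r\<close> by (blast dest: sympD)
qed

lemma rtranclp_max_degree_2_no_three_ends:
  assumes sym: "symp r"
    and deg2: "\<And>v y z s. r v y \<Longrightarrow> r v z \<Longrightarrow> r v s \<Longrightarrow> y = z \<or> y = s \<or> z = s"
    and ends: "\<exists>\<^sub>\<le>\<^sub>1y. r a y" "\<exists>\<^sub>\<le>\<^sub>1y. r b y" "\<exists>\<^sub>\<le>\<^sub>1y. r c y"
    and "r\<^sup>*\<^sup>* b a" "r\<^sup>*\<^sup>* b c" "a \<noteq> b" "c \<noteq> b" "a \<noteq> c"
  shows False
proof -
  obtain xs where xs: "rtrancl_path r b xs a" "distinct (b # xs)"
    using \<open>r\<^sup>*\<^sup>* b a\<close> rtrancl_path_distinct rtranclp_eq_rtrancl_path by metis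
  obtain ys where ys: "rtrancl_path r b ys c" "distinct (b # ys)"
    using \<open>r\<^sup>*\<^sup>* b c\<close> rtrancl_path_distinct rtranclp_eq_rtrancl_path by metis
  have "xs \<noteq> []" "ys \<noteq> []"
    using xs(1) ys(1) \<open>a \<noteq> b\<close> \<open>c \<noteq> b\<close> by (auto elim: rtrancl_path.cases)
  have "prefix xs ys \<or> prefix ys xs"
    by (rule rtrancl_path_prefix_max_degree_2[OF sym deg2 xs(1) ys(1) xs(2) ys(2), where p = b])
      (use xs ys ends(2) in \<open>auto dest: Uniq_D\<close>)
  then show False
    using rtrancl_path_prefix_end_two_neighbours[OF sym xs(1) ys(1)]
      rtrancl_path_prefix_end_two_neighbours[OF sym ys(1) xs(1)]
      xs ys \<open>xs \<noteq> []\<close> \<open>ys \<noteq> []\<close> \<open>a \<noteq> c\<close> ends(1,3)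
    by (metis Uniq_D)
qed

lemma reach_refl: "reach F x x"
  by (simp add: reach_def)

lemma reach_trans: "reach F x y \<Longrightarrow> reach F y z \<Longrightarrow> reach F x z"
  unfolding reach_def by (rule rtranclp_trans)

lemma reach_edge: "{x, y} \<in> F \<Longrightarrow> reach F x y"
  unfolding reach_def by (rule r_into_rtranclp) auto

lemma reach_within_edge: "{s, u} \<in> F \<Longrightarrow> x \<in> {s, u} \<Longrightarrow> y \<in> {s, u} \<Longrightarrow> reach F x y"
  by (auto simp: reach_refl reach_edge insert_commute)

lemma reach_eq_rtranclp: "reach F = (\<lambda>x y. {x, y} \<in> F)\<^sup>*\<^sup>*"
  by (simp add: reach_def)

lemma reach_closed:
  assumes "\<And>y z. y \<in> K \<Longrightarrow> {y, z} \<in> F \<Longrightarrow> z \<in> K" "x \<in> K" "reach F x y"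
  shows "y \<in> K"
  using assms(3) unfolding reach_def
  by (induction rule: rtranclp_induct) (use assms(1,2) in auto)

lemma simple_graph_finite_edges: "simple_graph V E \<Longrightarrow> finite E"
proof -
  assume "simple_graph V E"
  then have "E \<subseteq> Pow V" "finite V"
    unfolding simple_graph_def by auto
  then show "finite E"
    by (simp add: finite_subset)
qed

lemma simple_graph_edgeE:
  assumes "simple_graph V E" "e \<in> E"
  obtains x y where "x \<noteq> y" "x \<in> V" "y \<in> V" "e = {x, y}"
  using assms unfolding simple_graph_def by blast

lemma card_le_degree:
  assumes "finite E" "F \<subseteq> E" "\<And>e. e \<in> F \<Longrightarrow> v \<in> e"
  shows "card F \<le> degree E v"
  unfolding degree_def using assms by (intro card_mono) auto

lemma matching_insert:
  "matching E M \<Longrightarrow> e \<in> E \<Longrightarrow> (\<And>f. f \<in> M \<Longrightarrow> e \<inter> f = {}) \<Longrightarrow> matching E (insert e M)"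
  unfolding matching_def by blast

lemma matching_swap:
  assumes "matching E A" "matching E B" "\<And>e f. e \<in> A - S \<Longrightarrow> f \<in> B \<inter> S \<Longrightarrow> e \<inter> f = {}"
  shows "matching E ((A - S) \<union> (B \<inter> S))"
  unfolding matching_def
proof (intro conjI ballI impI)
  show "(A - S) \<union> (B \<inter> S) \<subseteq> E"
    using assms(1,2) unfolding matching_def by blast
next
  fix e f
  assume "e \<in> (A - S) \<union> (B \<inter> S)" "f \<in> (A - S) \<union> (B \<inter> S)" "e \<noteq> f"
  then consider "e \<in> A" "f \<in> A" | "e \<in> B" "f \<in> B" | "e \<in> A - S" "f \<in> B \<inter> S"
    | "f \<in> A - S" "e \<in> B \<inter> S"
    by blast
  then show "e \<inter> f = {}"
  proof cases
    case 1
    then show ?thesis using assms(1) \<open>e \<noteq> f\<close> unfolding matching_def by blast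
  next
    case 2
    then show ?thesis using assms(2) \<open>e \<noteq> f\<close> unfolding matching_def by blast
  next
    case 3
    then show ?thesis using assms(3) by blast
  next
    case 4
    then show ?thesis using assms(3)[of f e] by (simp add: Int_commute)
  qed
qed

lemma union_matchings_max_degree_2:
  assumes "matching E A" "matching E B" "{v, y} \<in> A \<union> B" "{v, z} \<in> A \<union> B" "{v, s} \<in> A \<union> B"
  shows "y = z \<or> y = s \<or> z = s"
proof -
  have same: "e = f" if "e \<in> M" "f \<in> M" "matching E M" "v \<in> e" "v \<in> f" for e f M
    using that unfolding matching_def by blast
  have "{v, y} = {v, z} \<or> {v, y} = {v, s} \<or> {v, z} = {v, s}"
    using assms(3-5) same[OF _ _ assms(1)] same[OF _ _ assms(2)] by blast
  then show ?thesis
    by (auto simp: doubleton_eq_iff)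
qed

lemma Uniq_neighbour_if_edges_unique:
  assumes "\<And>g g'. g \<in> F \<Longrightarrow> g' \<in> F \<Longrightarrow> x \<in> g \<Longrightarrow> x \<in> g' \<Longrightarrow> g = g'"
  shows "\<exists>\<^sub>\<le>\<^sub>1y. {x, y} \<in> F"
proof (rule Uniq_I)
  fix y z
  assume "{x, y} \<in> F" "{x, z} \<in> F"
  then have "{x, y} = {x, z}"
    using assms by blast
  then show "y = z"
    by (auto simp: doubleton_eq_iff)
qed

lemma component_is_P2:
  assumes F2: "\<And>e. e \<in> F \<Longrightarrow> \<exists>s t. s \<noteq> t \<and> e = {s, t}"
    and "{u, w} \<in> F" "u \<noteq> w"
    and nu: "\<And>z. {u, z} \<in> F \<Longrightarrow> z = w" and nw: "\<And>z. {w, z} \<in> F \<Longrightarrow> z = u"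
  shows "is_P2 F {v. reach F u v}"
proof -
  have C: "{v. reach F u v} = {u, w}"
  proof
    show "{v. reach F u v} \<subseteq> {u, w}"
      using reach_closed[of "{u, w}" F u] nu nw by blast
    show "{u, w} \<subseteq> {v. reach F u v}"
      using reach_refl reach_edge \<open>{u, w} \<in> F\<close> by auto
  qed
  have "comp_edges F {u, w} = {{u, w}}"
  proof
    show "comp_edges F {u, w} \<subseteq> {{u, w}}"
    proof
      fix g
      assume "g \<in> comp_edges F {u, w}"
      then have "g \<in> F" "g \<subseteq> {u, w}"
        by (auto simp: comp_edges_def)
      then obtain s t where "s \<noteq> t" "g = {s, t}"
        using F2 by blast
      with \<open>g \<subseteq> {u, w}\<close> show "g \<in> {{u, w}}"
        by (auto simp: insert_commute)
    qed
    show "{{u, w}} \<subseteq> comp_edges F {u, w}"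
      using \<open>{u, w} \<in> F\<close> by (auto simp: comp_edges_def)
  qed
  then show ?thesis
    unfolding is_P2_def C using \<open>u \<noteq> w\<close> by (intro exI[of _ u] exI[of _ w]) simp
qed

lemma component_is_P3_mid:
  assumes F2: "\<And>e. e \<in> F \<Longrightarrow> \<exists>s t. s \<noteq> t \<and> e = {s, t}"
    and "{m, p} \<in> F" "{m, q} \<in> F" "p \<noteq> q"
    and nm: "\<And>z. {m, z} \<in> F \<Longrightarrow> z = p \<or> z = q"
    and np: "\<And>z. {p, z} \<in> F \<Longrightarrow> z = m" and nq: "\<And>z. {q, z} \<in> F \<Longrightarrow> z = m"
    and "u \<in> {p, m, q}"
  shows "is_P3_mid F {v. reach F u v} m"
proof -
  have "m \<noteq> p" "m \<noteq> q"
    using F2 \<open>{m, p} \<in> F\<close> \<open>{m, q} \<in> F\<close> by (metis doubleton_eq_iff)+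
  have C: "{v. reach F u v} = {p, m, q}"
  proof
    show "{v. reach F u v} \<subseteq> {p, m, q}"
      using reach_closed[of "{p, m, q}" F u] nm np nq \<open>u \<in> {p, m, q}\<close> by blast
    have "reach F m p" "reach F m q" "reach F p m" "reach F q m"
      using \<open>{m, p} \<in> F\<close> \<open>{m, q} \<in> F\<close> by (auto intro: reach_edge simp: insert_commute)
    moreover have "reach F u m"
      using \<open>u \<in> {p, m, q}\<close> \<open>reach F p m\<close> \<open>reach F q m\<close> reach_refl by auto
    ultimately show "{p, m, q} \<subseteq> {v. reach F u v}"
      using reach_trans[OF \<open>reach F u m\<close>] by auto
  qed
  have "comp_edges F {p, m, q} = {{p, m}, {m, q}}"
  proof
    show "comp_edges F {p, m, q} \<subseteq> {{p, m}, {m, q}}"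
    proof
      fix g
      assume "g \<in> comp_edges F {p, m, q}"
      then have "g \<in> F" "g \<subseteq> {p, m, q}"
        by (auto simp: comp_edges_def)
      then obtain s t where st: "s \<noteq> t" "g = {s, t}" "{s, t} \<in> F"
        using F2 by blast
      then consider "s = m" | "s = p" | "s = q"
        using \<open>g \<subseteq> {p, m, q}\<close> by auto
      then show "g \<in> {{p, m}, {m, q}}"
      proof cases
        case 1
        then have "t = p \<or> t = q"
          using nm[of t] st by simp
        then show ?thesis
          using st 1 by auto
      next
        case 2
        then have "t = m"
          using np[of t] st by simp
        then show ?thesis
          using st 2 by auto
      next
        case 3
        then have "t = m"
          using nq[of t] st by simp
        then show ?thesis
          using st 3 by (auto simp: insert_commute)
      qed
    qed
    show "{{p, m}, {m, q}} \<subseteq> comp_edges F {p, m, q}"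
      using \<open>{m, p} \<in> F\<close> \<open>{m, q} \<in> F\<close> by (auto simp: comp_edges_def insert_commute)
  qed
  then show ?thesis
    unfolding is_P3_mid_def C using \<open>p \<noteq> q\<close> \<open>m \<noteq> p\<close> \<open>m \<noteq> q\<close>
    by (intro exI[of _ p] exI[of _ q]) simp
qed

lemma components_P2_or_P3:
  assumes F2: "\<And>e. e \<in> F \<Longrightarrow> \<exists>s t. s \<noteq> t \<and> e = {s, t}"
    and deg2: "\<And>v p q s. {v, p} \<in> F \<Longrightarrow> {v, q} \<in> F \<Longrightarrow> {v, s} \<in> F \<Longrightarrow> p = q \<or> p = s \<or> q = s"
    and leaf: "\<And>u w p q. {u, w} \<in> F \<Longrightarrow> {u, p} \<in> F \<Longrightarrow> {w, q} \<in> F \<Longrightarrow> p = w \<or> q = u"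
    and "C \<in> components F"
  shows "is_P2 F C \<or> is_P3 F C"
proof -
  obtain u e where "e \<in> F" "u \<in> e" and C: "C = {v. reach F u v}"
    using \<open>C \<in> components F\<close> by (auto simp: components_def)
  then obtain w where uw: "{u, w} \<in> F" "u \<noteq> w"
    using F2 by (metis empty_iff insert_commute insert_iff)
  have wu: "{w, u} \<in> F"
    using uw by (simp add: insert_commute)
  consider (mid_u) p where "{u, p} \<in> F" "p \<noteq> w" | (mid_w) q where "{w, q} \<in> F" "q \<noteq> u"
    | (P2) "\<And>z. {u, z} \<in> F \<Longrightarrow> z = w" "\<And>z. {w, z} \<in> F \<Longrightarrow> z = u"
    by blast
  then show ?thesis
  proof cases
    case mid_u
    have "is_P3_mid F {v. reach F u v} u"
      using mid_u uw leaf[of u w p] leaf[of u p w] deg2[of u w p]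
      by (intro component_is_P3_mid[OF F2]) blast+
    then show ?thesis
      unfolding is_P3_def C by blast
  next
    case mid_w
    have "is_P3_mid F {v. reach F u v} w"
      using mid_w wu leaf[of w u q] leaf[of w q u] deg2[of w u q]
      by (intro component_is_P3_mid[OF F2]) blast+
    then show ?thesis
      unfolding is_P3_def C by blast
  next
    case P2
    then show ?thesis
      using component_is_P2[OF F2 uw] C by blast
  qed
qed

lemma is_P3_mid_neighbours:
  assumes "C \<in> components F" "is_P3_mid F C b"
  obtains a c where "a \<noteq> c" "{a, b} \<in> F" "{b, c} \<in> F" "\<And>z. {b, z} \<in> F \<Longrightarrow> z = a \<or> z = c"
proof -
  obtain u where C: "C = {v. reach F u v}"
    using assms(1) by (auto simp: components_def)
  obtain a c where "a \<noteq> c" "b \<in> C" and edges: "comp_edges F C = {{a, b}, {b, c}}"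
    using assms(2) unfolding is_P3_mid_def by auto
  then have "{a, b} \<in> F" "{b, c} \<in> F"
    by (auto simp: comp_edges_def)
  moreover have "z = a \<or> z = c" if "{b, z} \<in> F" for z
  proof -
    have "z \<in> C"
      using \<open>b \<in> C\<close> reach_trans[OF _ reach_edge[OF that]] by (simp add: C)
    then have "{b, z} \<in> comp_edges F C"
      using that \<open>b \<in> C\<close> by (simp add: comp_edges_def)
    then show ?thesis
      using edges by (auto simp: doubleton_eq_iff)
  qed
  ultimately show ?thesis
    using that \<open>a \<noteq> c\<close> by blast
qed

definition maximum_matching_pair :: "'a set set \<Rightarrow> 'a set set \<Rightarrow> 'a set set \<Rightarrow> bool" where
  "maximum_matching_pair E M1 M2 \<longleftrightarrow> matching E M1 \<and> matching E M2 \<and> M1 \<inter> M2 = {} \<and>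
     (\<forall>N1 N2. matching E N1 \<and> matching E N2 \<and> N1 \<inter> N2 = {} \<longrightarrow>
        card (N1 \<union> N2) \<le> card (M1 \<union> M2))"

lemma maximum_matching_pairD:
  assumes "maximum_matching_pair E M1 M2"
  shows "matching E M1" "matching E M2" "M1 \<inter> M2 = {}"
  using assms by (simp_all add: maximum_matching_pair_def)

lemma maximum_matching_pair_subset:
  assumes "maximum_matching_pair E A B"
  shows "A \<union> B \<subseteq> E"
  using maximum_matching_pairD(1,2)[OF assms] by (auto simp: matching_def)

lemma maximum_matching_pair_commute:
  "maximum_matching_pair E M1 M2 \<Longrightarrow> maximum_matching_pair E M2 M1"
  unfolding maximum_matching_pair_def by (simp add: Un_commute Int_commute)

lemma rest_edges_commute: "rest_edges E M1 M2 = rest_edges E M2 M1"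
  by (simp add: rest_edges_def Un_commute)

lemma maximum_matching_pair_not_augmentable:
  assumes "maximum_matching_pair E M1 M2" "finite E" "e \<in> rest_edges E M1 M2"
    and "matching E N1" "matching E N2" "N1 \<inter> N2 = {}" "N1 \<union> N2 = insert e (M1 \<union> M2)"
  shows False
proof -
  have "finite (M1 \<union> M2)"
    using maximum_matching_pair_subset[OF assms(1)] assms(2) by (rule finite_subset)
  then have "card (N1 \<union> N2) = Suc (card (M1 \<union> M2))"
    using assms(3,7) by (simp add: rest_edges_def)
  moreover have "card (N1 \<union> N2) \<le> card (M1 \<union> M2)"
    using assms(1,4-6) unfolding maximum_matching_pair_def by blast
  ultimately show False
    by simp
qed

lemma maximum_matching_pair_covers_rest_edge:
  assumes "maximum_matching_pair E M1 M2" "finite E" "{u, w} \<in> rest_edges E M1 M2" "M \<in> {M1, M2}"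
  shows "\<exists>f\<in>M. u \<in> f \<or> w \<in> f"
proof -
  have "\<exists>f\<in>N1. u \<in> f \<or> w \<in> f"
    if N: "maximum_matching_pair E N1 N2" "{u, w} \<in> rest_edges E N1 N2" for N1 N2
  proof (rule ccontr)
    assume "\<not> (\<exists>f\<in>N1. u \<in> f \<or> w \<in> f)"
    then have "matching E (insert {u, w} N1)"
      using maximum_matching_pairD(1)[OF N(1)] N(2)
      by (intro matching_insert) (auto simp: rest_edges_def)
    then show False
      by (rule maximum_matching_pair_not_augmentable[OF N(1) assms(2) N(2) _
            maximum_matching_pairD(2)[OF N(1)]])
        (use maximum_matching_pairD(3)[OF N(1)] N(2) in \<open>auto simp: rest_edges_def\<close>)
  qed
  note covers = this
  have "{u, w} \<in> rest_edges E M2 M1"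
    using assms(3) by (simp add: rest_edges_commute)
  then show ?thesis
    using covers[OF assms(1,3)] covers[OF maximum_matching_pair_commute[OF assms(1)]] assms(4)
    by auto
qed

text \<open>If b is covered only by A and t only by B, exchanging A and B on the component of b
  in A \<union> B would leave both b and t uncovered by the new A-matching, so that bt could be added.\<close>

lemma maximum_matching_pair_reach_across_rest_edge:
  assumes "simple_graph V E" "maximum_matching_pair E A B" "{t, b} \<in> rest_edges E A B"
    and b_in_A: "\<And>g. g \<in> A \<union> B \<Longrightarrow> b \<in> g \<Longrightarrow> g \<in> A"
    and t_in_B: "\<And>g. g \<in> A \<union> B \<Longrightarrow> t \<in> g \<Longrightarrow> g \<in> B"
  shows "reach (A \<union> B) b t"
proof (rule ccontr)
  assume not_reach: "\<not> reach (A \<union> B) b t"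
  define D where "D = A \<union> B"
  define S where "S = {e \<in> D. \<exists>y\<in>e. reach D b y}"
  note mA = maximum_matching_pairD(1)[OF assms(2)]
  note mB = maximum_matching_pairD(2)[OF assms(2)]
  note disj = maximum_matching_pairD(3)[OF assms(2)]
  have "D \<subseteq> E"
    using mA mB by (simp add: D_def matching_def)
  have S_reach: "reach D b y" if "e \<in> S" "y \<in> e" for e y
  proof -
    obtain y' where "e \<in> D" "y' \<in> e" "reach D b y'"
      using \<open>e \<in> S\<close> unfolding S_def by blast
    moreover obtain s u where "e = {s, u}"
      using \<open>e \<in> D\<close> \<open>D \<subseteq> E\<close> by (meson simple_graph_edgeE[OF assms(1)] subsetD)
    ultimately have "reach D y' y"
      using reach_within_edge[of s u D y' y] \<open>y \<in> e\<close> by simp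
    then show ?thesis
      by (rule reach_trans[OF \<open>reach D b y'\<close>])
  qed
  have separated: "e \<inter> f = {}" if "e \<in> D - S" "f \<in> S" for e f
  proof (rule ccontr)
    assume "e \<inter> f \<noteq> {}"
    then obtain y where "y \<in> e" "y \<in> f"
      by blast
    then have "reach D b y"
      using S_reach \<open>f \<in> S\<close> by blast
    then show False
      using that \<open>y \<in> e\<close> by (auto simp: S_def)
  qed
  define N1 where "N1 = (A - S) \<union> (B \<inter> S)"
  define N2 where "N2 = (B - S) \<union> (A \<inter> S)"
  have N1: "matching E N1"
    unfolding N1_def using separated by (intro matching_swap[OF mA mB]) (auto simp: D_def)
  have N2: "matching E N2"
    unfolding N2_def using separated by (intro matching_swap[OF mB mA]) (auto simp: D_def)
  have "{t, b} \<inter> g = {}" if "g \<in> N1" for g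
  proof -
    have "t \<notin> g"
    proof
      assume "t \<in> g"
      have "g \<in> A \<union> B"
        using that by (auto simp: N1_def)
      then have "g \<in> B"
        using t_in_B \<open>t \<in> g\<close> by blast
      then have "g \<in> S"
        using that disj by (auto simp: N1_def)
      then show False
        using S_reach[of g t] \<open>t \<in> g\<close> not_reach by (simp add: D_def)
    qed
    moreover have "b \<notin> g"
    proof
      assume "b \<in> g"
      have "g \<in> A \<union> B"
        using that by (auto simp: N1_def)
      then have "g \<in> A \<inter> S"
        using b_in_A \<open>b \<in> g\<close> reach_refl[of D b] by (auto simp: S_def D_def)
      then show False
        using that disj by (auto simp: N1_def)
    qed
    ultimately show ?thesis
      by blast
  qed
  then have "matching E (insert {t, b} N1)"
    using N1 assms(3) by (intro matching_insert) (auto simp: rest_edges_def)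
  moreover have "insert {t, b} N1 \<inter> N2 = {}"
    using assms(3) disj by (auto simp: N1_def N2_def rest_edges_def)
  moreover have "insert {t, b} N1 \<union> N2 = insert {t, b} (A \<union> B)"
    by (auto simp: N1_def N2_def)
  ultimately show False
    by (rule maximum_matching_pair_not_augmentable[OF assms(2)
          simple_graph_finite_edges[OF assms(1)] assms(3) _ N2])
qed

locale subcubic_graph =
  fixes V :: "'a set" and E :: "'a set set"
  assumes simple: "simple_graph V E"
    and degree_le_3: "v \<in> V \<Longrightarrow> degree E v \<le> 3"
    and no_adjacent_cubic: "{u, v} \<in> E \<Longrightarrow> degree E u = 3 \<Longrightarrow> degree E v \<noteq> 3"
begin

lemma finite_edges: "finite E"
  using simple by (rule simple_graph_finite_edges)

lemma edge_shape: "e \<in> E \<Longrightarrow> \<exists>s t. s \<noteq> t \<and> e = {s, t}"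
  by (meson simple simple_graph_edgeE)

lemma edge_degree_le_3: "e \<in> E \<Longrightarrow> v \<in> e \<Longrightarrow> degree E v \<le> 3"
  using simple degree_le_3 by (auto elim!: simple_graph_edgeE)

lemma card_edges_at_le_3:
  assumes "F \<subseteq> E" "\<And>e. e \<in> F \<Longrightarrow> v \<in> e"
  shows "card F \<le> 3"
proof (cases "F = {}")
  case False
  then obtain e where "e \<in> F"
    by blast
  then have "degree E v \<le> 3"
    using assms by (blast intro: edge_degree_le_3)
  then show ?thesis
    using card_le_degree[OF finite_edges assms] by linarith
qed simp

lemma three_edges_at:
  assumes "e1 \<in> E" "e2 \<in> E" "e3 \<in> E" "v \<in> e1" "v \<in> e2" "v \<in> e3"
    and "e1 \<noteq> e2" "e1 \<noteq> e3" "e2 \<noteq> e3"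
  shows "3 \<le> degree E v"
proof -
  have "card {e1, e2, e3} \<le> degree E v"
    by (rule card_le_degree[OF finite_edges]) (use assms in auto)
  then show ?thesis
    using assms by simp
qed

lemma no_four_edges_at:
  assumes "e1 \<in> E" "e2 \<in> E" "e3 \<in> E" "e4 \<in> E" "v \<in> e1" "v \<in> e2" "v \<in> e3" "v \<in> e4"
    and "e1 \<noteq> e2" "e1 \<noteq> e3" "e1 \<noteq> e4" "e2 \<noteq> e3" "e2 \<noteq> e4" "e3 \<noteq> e4"
  shows False
proof -
  have "card {e1, e2, e3, e4} \<le> 3"
    by (rule card_edges_at_le_3) (use assms in auto)
  then show False
    using assms by simp
qed

lemma not_adjacent_cubic:
  assumes "{u, v} \<in> E" "3 \<le> degree E u" "3 \<le> degree E v"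
  shows False
proof -
  have "degree E u \<le> 3" "degree E v \<le> 3"
    using edge_degree_le_3[OF assms(1)] by simp_all
  then show False
    using no_adjacent_cubic[OF assms(1)] assms(2,3) by simp
qed

lemma rest_degree_le_2:
  assumes mp: "maximum_matching_pair E A B"
    and H: "{v, p} \<in> rest_edges E A B" "{v, q} \<in> rest_edges E A B" "{v, s} \<in> rest_edges E A B"
  shows "p = q \<or> p = s \<or> q = s"
proof (rule ccontr)
  assume "\<not> (p = q \<or> p = s \<or> q = s)"
  then have distinct: "{v, p} \<noteq> {v, q}" "{v, p} \<noteq> {v, s}" "{v, q} \<noteq> {v, s}"
    by (auto simp: doubleton_eq_iff)
  have E3: "{v, p} \<in> E" "{v, q} \<in> E" "{v, s} \<in> E"
    using H by (auto simp: rest_edges_def)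
  have v_cubic: "3 \<le> degree E v"
    using three_edges_at[OF E3] distinct by simp
  have p_covered: "p \<in> f" if "f \<in> A \<union> B" "v \<in> f \<or> p \<in> f" for f
  proof -
    have "f \<in> E" "f \<notin> rest_edges E A B"
      using that maximum_matching_pair_subset[OF mp] by (auto simp: rest_edges_def)
    then have "v \<notin> f"
      using no_four_edges_at[OF E3 \<open>f \<in> E\<close>, of v] distinct H by auto
    then show ?thesis
      using that by simp
  qed
  obtain f1 where "f1 \<in> A" "v \<in> f1 \<or> p \<in> f1"
    using maximum_matching_pair_covers_rest_edge[OF mp finite_edges H(1), of A] by auto
  moreover obtain f2 where "f2 \<in> B" "v \<in> f2 \<or> p \<in> f2"
    using maximum_matching_pair_covers_rest_edge[OF mp finite_edges H(1), of B] by auto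
  ultimately have "f1 \<in> A" "f2 \<in> B" "p \<in> f1" "p \<in> f2"
    using p_covered by auto
  moreover have "f1 \<noteq> f2"
    using maximum_matching_pairD(3)[OF mp] calculation by blast
  moreover have "f1 \<noteq> {v, p}" "f2 \<noteq> {v, p}"
    using H(1) calculation by (auto simp: rest_edges_def)
  ultimately have "3 \<le> degree E p"
    using three_edges_at[of f1 f2 "{v, p}" p] maximum_matching_pair_subset[OF mp] E3(1) by auto
  then show False
    using not_adjacent_cubic[OF E3(1) v_cubic] by simp
qed

lemma rest_edge_leaf_end:
  assumes mp: "maximum_matching_pair E A B"
    and H: "{u, w} \<in> rest_edges E A B" "{u, p} \<in> rest_edges E A B" "{w, q} \<in> rest_edges E A B"
  shows "p = w \<or> q = u"
proof (rule ccontr)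
  assume "\<not> (p = w \<or> q = u)"
  have E3: "{u, w} \<in> E" "{u, p} \<in> E" "{w, q} \<in> E"
    using H by (auto simp: rest_edges_def)
  have "u \<noteq> w"
    using edge_shape[OF E3(1)] by (auto simp: doubleton_eq_iff)
  then have distinct: "{u, w} \<noteq> {u, p}" "{u, w} \<noteq> {w, q}"
    using \<open>\<not> (p = w \<or> q = u)\<close> by (auto simp: doubleton_eq_iff)
  have D: "f \<in> E" "f \<noteq> {u, w}" "f \<noteq> {u, p}" "f \<noteq> {w, q}" if "f \<in> A \<union> B" for f
    using that H maximum_matching_pair_subset[OF mp] by (auto simp: rest_edges_def)
  obtain f1 f2 where f: "f1 \<in> A" "f2 \<in> B" "u \<in> f1 \<or> w \<in> f1" "u \<in> f2 \<or> w \<in> f2"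
    using maximum_matching_pair_covers_rest_edge[OF mp finite_edges H(1), of A]
      maximum_matching_pair_covers_rest_edge[OF mp finite_edges H(1), of B] by auto
  have "f1 \<noteq> f2"
    using maximum_matching_pairD(3)[OF mp] f(1,2) by blast
  note D1 = D[of f1] and D2 = D[of f2]
  have "\<not> (u \<in> f1 \<and> u \<in> f2)"
  proof
    assume "u \<in> f1 \<and> u \<in> f2"
    then show False
      by (intro no_four_edges_at[of f1 f2 "{u, w}" "{u, p}" u])
        (use D1 D2 f(1,2) E3 distinct \<open>f1 \<noteq> f2\<close> in auto)
  qed
  moreover have "\<not> (w \<in> f1 \<and> w \<in> f2)"
  proof
    assume "w \<in> f1 \<and> w \<in> f2"
    then show False
      by (intro no_four_edges_at[of f1 f2 "{u, w}" "{w, q}" w])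
        (use D1 D2 f(1,2) E3 distinct \<open>f1 \<noteq> f2\<close> in auto)
  qed
  ultimately obtain fu fw where "fu \<in> A \<union> B" "fw \<in> A \<union> B" "u \<in> fu" "w \<in> fw"
    using f by auto
  then have "3 \<le> degree E u" "3 \<le> degree E w"
    using three_edges_at[of fu "{u, w}" "{u, p}" u] three_edges_at[of fw "{u, w}" "{w, q}" w]
      D[of fu] D[of fw] E3 distinct by auto
  then show False
    using not_adjacent_cubic[OF E3(1)] by simp
qed

lemma rest_components_P2_or_P3:
  assumes "maximum_matching_pair E A B" "C \<in> components (rest_edges E A B)"
  shows "is_P2 (rest_edges E A B) C \<or> is_P3 (rest_edges E A B) C"
  by (rule components_P2_or_P3[OF _ rest_degree_le_2[OF assms(1)] rest_edge_leaf_end[OF assms(1)]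
        assms(2)])
    (use edge_shape in \<open>auto simp: rest_edges_def\<close>)

lemma unique_cover_at_rest_neighbour:
  assumes mp: "maximum_matching_pair E A B" and "degree E b = 3" "{t, b} \<in> rest_edges E A B"
    and b_in_A: "\<And>g. g \<in> A \<union> B \<Longrightarrow> b \<in> g \<Longrightarrow> g \<in> A"
  shows "\<exists>g\<in>B. t \<in> g \<and> (\<forall>g'\<in>A \<union> B. t \<in> g' \<longrightarrow> g' = g)"
proof -
  have tb: "{t, b} \<in> E" "{t, b} \<notin> A \<union> B"
    using assms(3) by (auto simp: rest_edges_def)
  obtain g where g: "g \<in> B" "t \<in> g \<or> b \<in> g"
    using maximum_matching_pair_covers_rest_edge[OF mp finite_edges assms(3), of B] by auto
  have "b \<notin> g"
    using b_in_A[of g] g(1) maximum_matching_pairD(3)[OF mp] by blast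
  with g have "t \<in> g"
    by simp
  have "{b, t} \<in> E"
    using tb(1) by (simp add: insert_commute)
  then have "\<not> 3 \<le> degree E t"
    using not_adjacent_cubic[of b t] \<open>degree E b = 3\<close> by auto
  have "g' = g" if "g' \<in> A \<union> B" "t \<in> g'" for g'
  proof (rule ccontr)
    assume "g' \<noteq> g"
    have "3 \<le> degree E t"
      by (rule three_edges_at[of g' g "{t, b}" t])
        (use that \<open>g' \<noteq> g\<close> g(1) \<open>t \<in> g\<close> tb maximum_matching_pair_subset[OF mp] in auto)
    with \<open>\<not> 3 \<le> degree E t\<close> show False
      by simp
  qed
  with g(1) \<open>t \<in> g\<close> show ?thesis
    by blast
qed

text \<open>By the exchange argument, a and c lie in the component of b in A \<union> B. That component is a
  path, yet a, b and c would all be ends of it.\<close>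

lemma cubic_rest_middle_impossible:
  assumes mp: "maximum_matching_pair E A B"
    and H: "{a, b} \<in> rest_edges E A B" "{c, b} \<in> rest_edges E A B" "a \<noteq> c"
    and "degree E b = 3"
    and b_in_A: "\<And>g. g \<in> A \<union> B \<Longrightarrow> b \<in> g \<Longrightarrow> g \<in> A"
  shows False
proof -
  note mA = maximum_matching_pairD(1)[OF mp] and mB = maximum_matching_pairD(2)[OF mp]
  have end_at: "reach (A \<union> B) b t \<and> (\<exists>\<^sub>\<le>\<^sub>1y. {t, y} \<in> A \<union> B)"
    if t_rest: "{t, b} \<in> rest_edges E A B" for t
  proof -
    obtain g where "g \<in> B" and g: "\<And>g'. g' \<in> A \<union> B \<Longrightarrow> t \<in> g' \<Longrightarrow> g' = g"
      using unique_cover_at_rest_neighbour[OF mp \<open>degree E b = 3\<close> t_rest b_in_A] by blast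
    have "reach (A \<union> B) b t"
      using \<open>g \<in> B\<close> g
      by (intro maximum_matching_pair_reach_across_rest_edge[OF simple mp t_rest b_in_A]) auto
    moreover have "\<exists>\<^sub>\<le>\<^sub>1y. {t, y} \<in> A \<union> B"
      using g by (intro Uniq_neighbour_if_edges_unique) blast
    ultimately show ?thesis ..
  qed
  have b_end: "\<exists>\<^sub>\<le>\<^sub>1y. {b, y} \<in> A \<union> B"
  proof (rule Uniq_neighbour_if_edges_unique)
    fix g g'
    assume "g \<in> A \<union> B" "g' \<in> A \<union> B" "b \<in> g" "b \<in> g'"
    then show "g = g'"
      using b_in_A mA unfolding matching_def by blast
  qed
  have "a \<noteq> b" "c \<noteq> b"
    using H(1,2) edge_shape[of "{a, b}"] edge_shape[of "{c, b}"]
    by (auto simp: rest_edges_def doubleton_eq_iff)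
  have "symp (\<lambda>x y. {x, y} \<in> A \<union> B)"
    by (auto simp: symp_def insert_commute)
  from rtranclp_max_degree_2_no_three_ends[OF this union_matchings_max_degree_2[OF mA mB]
      conjunct2[OF end_at[OF H(1)]] b_end conjunct2[OF end_at[OF H(2)]]]
  show False
    using conjunct1[OF end_at[OF H(1)]] conjunct1[OF end_at[OF H(2)]] \<open>a \<noteq> b\<close> \<open>c \<noteq> b\<close> \<open>a \<noteq> c\<close>
    by (simp add: reach_eq_rtranclp)
qed

lemma cubic_rest_P3_middle_unique_cover:
  assumes mp: "maximum_matching_pair E A B" and "degree E b = 3"
    and H: "{a, b} \<in> rest_edges E A B" "{b, c} \<in> rest_edges E A B" "a \<noteq> c"
    and nbrs: "\<And>z. {b, z} \<in> rest_edges E A B \<Longrightarrow> z = a \<or> z = c"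
  obtains f where "f \<in> A \<union> B" "\<And>g. g \<in> A \<union> B \<Longrightarrow> b \<in> g \<Longrightarrow> g = f"
proof -
  have E2: "{a, b} \<in> E" "{b, c} \<in> E"
    using H by (auto simp: rest_edges_def)
  have "{a, b} \<noteq> {b, c}"
    using \<open>a \<noteq> c\<close> by (auto simp: doubleton_eq_iff)
  have "\<not> {e \<in> E. b \<in> e} \<subseteq> {{a, b}, {b, c}}"
  proof
    assume "{e \<in> E. b \<in> e} \<subseteq> {{a, b}, {b, c}}"
    then have "degree E b \<le> card {{a, b}, {b, c}}"
      unfolding degree_def by (rule card_mono[rotated]) simp
    with \<open>degree E b = 3\<close> \<open>{a, b} \<noteq> {b, c}\<close> show False
      by simp
  qed
  then obtain f where f: "f \<in> E" "b \<in> f" "f \<noteq> {a, b}" "f \<noteq> {b, c}"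
    by blast
  have "f \<notin> rest_edges E A B"
  proof
    assume "f \<in> rest_edges E A B"
    moreover obtain z where "f = {b, z}"
      using edge_shape[OF f(1)] f(2) by (auto simp: insert_commute)
    ultimately have "z = a \<or> z = c"
      using nbrs by simp
    then show False
      using \<open>f = {b, z}\<close> f(3,4) by (auto simp: insert_commute)
  qed
  with f(1) have "f \<in> A \<union> B"
    by (simp add: rest_edges_def)
  moreover have "g = f" if "g \<in> A \<union> B" "b \<in> g" for g
  proof (rule ccontr)
    assume "g \<noteq> f"
    show False
      by (rule no_four_edges_at[of "{a, b}" "{b, c}" f g b])
        (use that f E2 H \<open>g \<noteq> f\<close> \<open>{a, b} \<noteq> {b, c}\<close> maximum_matching_pair_subset[OF mp]
          in \<open>auto simp: rest_edges_def\<close>)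
  qed
  ultimately show ?thesis
    using that by blast
qed

lemma rest_P3_middle_degree_2:
  assumes mp: "maximum_matching_pair E A B"
    and "C \<in> components (rest_edges E A B)" "is_P3_mid (rest_edges E A B) C b"
  shows "degree E b = 2"
proof -
  obtain a c where "a \<noteq> c" and H: "{a, b} \<in> rest_edges E A B" "{b, c} \<in> rest_edges E A B"
    and nbrs: "\<And>z. {b, z} \<in> rest_edges E A B \<Longrightarrow> z = a \<or> z = c"
    using is_P3_mid_neighbours[OF assms(2,3)] by blast
  have E2: "{a, b} \<in> E" "{b, c} \<in> E"
    using H by (auto simp: rest_edges_def)
  have "{a, b} \<noteq> {b, c}"
    using \<open>a \<noteq> c\<close> by (auto simp: doubleton_eq_iff)
  have "card {{a, b}, {b, c}} \<le> degree E b"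
    by (rule card_le_degree[OF finite_edges]) (use E2 in auto)
  moreover have "degree E b \<le> 3"
    using edge_degree_le_3[OF E2(1)] by simp
  moreover have "degree E b \<noteq> 3"
  proof
    assume cubic: "degree E b = 3"
    then obtain f where "f \<in> A \<union> B" and only_f: "\<And>g. g \<in> A \<union> B \<Longrightarrow> b \<in> g \<Longrightarrow> g = f"
      using cubic_rest_P3_middle_unique_cover[OF mp _ H \<open>a \<noteq> c\<close> nbrs] by blast
    have H': "{c, b} \<in> rest_edges E A B" "{a, b} \<in> rest_edges E B A" "{c, b} \<in> rest_edges E B A"
      using H by (auto simp: rest_edges_def insert_commute)
    show False
    proof (cases "f \<in> A")
      case True
      with only_f show False
        using cubic_rest_middle_impossible[OF mp H(1) H'(1) \<open>a \<noteq> c\<close> cubic] by blast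
    next
      case False
      with only_f \<open>f \<in> A \<union> B\<close> show False
        using cubic_rest_middle_impossible[OF maximum_matching_pair_commute[OF mp] H'(2,3)
            \<open>a \<noteq> c\<close> cubic] by blast
    qed
  qed
  ultimately show ?thesis
    using \<open>{a, b} \<noteq> {b, c}\<close> by simp
qed

end

theorem lemma1:
  fixes V :: "'a set" and E M1 M2 :: "'a set set"
  assumes G: "simple_graph V E"
    and conn: "connected_graph V E"
    and deg: "\<forall>v\<in>V. 2 \<le> degree E v \<and> degree E v \<le> 3"
    and no33: "\<forall>u v. {u, v} \<in> E \<longrightarrow> \<not> (degree E u = 3 \<and> degree E v = 3)"
    and M1: "matching E M1" and M2: "matching E M2" and disj: "M1 \<inter> M2 = {}"
    and maxi: "\<forall>N1 N2. matching E N1 \<and> matching E N2 \<and> N1 \<inter> N2 = {} \<longrightarrow>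
                 card (N1 \<union> N2) \<le> card (M1 \<union> M2)"
    and mini: "\<forall>N1 N2. matching E N1 \<and> matching E N2 \<and> N1 \<inter> N2 = {} \<and>
                 card (N1 \<union> N2) = card (M1 \<union> M2) \<longrightarrow>
                 card (components (rest_edges E M1 M2)) \<le> card (components (rest_edges E N1 N2))"
  shows "(\<forall>C\<in>components (rest_edges E M1 M2).
            is_P2 (rest_edges E M1 M2) C \<or> is_P3 (rest_edges E M1 M2) C) \<and>
         (\<forall>C\<in>components (rest_edges E M1 M2). \<forall>b.
            is_P3_mid (rest_edges E M1 M2) C b \<longrightarrow> degree E b = 2)"
proof -
  interpret subcubic_graph V E
    using G deg no33 by unfold_locales auto
  have mp: "maximum_matching_pair E M1 M2"
    using M1 M2 disj maxi by (simp add: maximum_matching_pair_def)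
  show ?thesis
    using rest_components_P2_or_P3[OF mp] rest_P3_middle_degree_2[OF mp] by blast
qed

end
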